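(* Let $A\subseteq B\subseteq C$ be extensions of commutative rings. Then there is an exact sequence of abelian groups $$0\longrightarrow \mathfrak{C}(A,B)\longrightarrow \mathfrak{C}(A,C)\longrightarrow \mathfrak{C}(B,C),$$ where the first map is induced by the inclusion $\mathscr{G}(A,B)\subseteq \mathscr{G}(A,C)$ and the second map is induced by $L\mapsto LB$.
   Context: All rings are commutative with identity. For an extension of rings $R\subseteq S$ and $R$-submodules $L,L'$ of $S$, $LL'$ denotes the $R$-submodule of $S$ of all finite sums $\sum x_ky_k$ with $x_k\in L$, $y_k\in L'$. An $R$-submodule $L$ of $S$ is an invertible ideal of the extension $R\subseteq S$ if $LL'=R$ for some $R$-submodule $L'$ of $S$. These form an abelian group $\mathscr{G}(R,S)$ under multiplication with identity $R$, and $\mathfrak{C}(R,S)=\mathscr{G}(R,S)/\{Rx: x\in S^\ast\}$ is the ideal class group of the extension ($S^\ast$ the unit group of $S$). *)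

theory Defs
  imports "HOL-Algebra.Coset"
begin

text \<open>Ambient commutative ring: a type of class comm_ring_1 (the ring C).
 Subrings of it are given as sets.\<close>

definition subring_of :: "'a::comm_ring_1 set \<Rightarrow> bool" where
  "subring_of R \<longleftrightarrow> 1 \<in> R \<and> (\<forall>x\<in>R. \<forall>y\<in>R. x + y \<in> R \<and> x * y \<in> R) \<and> (\<forall>x\<in>R. - x \<in> R)"

definition submod :: "'a::comm_ring_1 set \<Rightarrow> 'a set \<Rightarrow> 'a set \<Rightarrow> bool" where
  "submod R S L \<longleftrightarrow> L \<subseteq> S \<and> 0 \<in> L \<and> (\<forall>x\<in>L. \<forall>y\<in>L. x + y \<in> L) \<and> (\<forall>r\<in>R. \<forall>x\<in>L. r * x \<in> L)"

definition ext_prod :: "'a::comm_ring_1 set \<Rightarrow> 'a set \<Rightarrow> 'a set" where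
  "ext_prod L M = {(\<Sum>i<n. x i * y i) | (n::nat) x y. \<forall>i<n. x i \<in> L \<and> y i \<in> M}"

definition invertible_ideal :: "'a::comm_ring_1 set \<Rightarrow> 'a set \<Rightarrow> 'a set \<Rightarrow> bool" where
  "invertible_ideal R S L \<longleftrightarrow> submod R S L \<and> (\<exists>L'. submod R S L' \<and> ext_prod L L' = R)"

definition IG :: "'a::comm_ring_1 set \<Rightarrow> 'a set \<Rightarrow> 'a set monoid" where
  "IG R S = \<lparr>carrier = {L. invertible_ideal R S L}, mult = ext_prod, one = R\<rparr>"

definition unit_in :: "'a::comm_ring_1 set \<Rightarrow> 'a \<Rightarrow> bool" where
  "unit_in S x \<longleftrightarrow> x \<in> S \<and> (\<exists>y\<in>S. x * y = 1)"

definition cyc :: "'a::comm_ring_1 set \<Rightarrow> 'a \<Rightarrow> 'a set" where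
  "cyc R x = {r * x | r. r \<in> R}"

definition Princ :: "'a::comm_ring_1 set \<Rightarrow> 'a set \<Rightarrow> 'a set set" where
  "Princ R S = {cyc R x | x. unit_in S x}"

definition ClassGroup :: "'a::comm_ring_1 set \<Rightarrow> 'a set \<Rightarrow> 'a set set monoid" where
  "ClassGroup R S = IG R S Mod Princ R S"

definition ideal_class :: "'a::comm_ring_1 set \<Rightarrow> 'a set \<Rightarrow> 'a set \<Rightarrow> 'a set set" where
  "ideal_class R S L = r_coset (IG R S) (Princ R S) L"

end

theory Submission
  imports Defs
begin

text \<open>The inclusion \<G>(A,B) \<subseteq> \<G>(A,C) and the extension L \<mapsto> LB from \<G>(A,C) to \<G>(B,C)
  are group homomorphisms carrying principal ideals to principal ideals, so they induce the two
  maps of class groups, and exactness reduces to three facts about invertible ideals.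
  If an invertible ideal of A \<subseteq> B is Ax for a unit x of C, then x and x\<inverse> lie in B:
  x\<inverse> multiplies the inverse ideal into itself and 1 lies in the product; this gives injectivity.
  Every L in \<G>(A,B) has LB = B. Conversely, if L is in \<G>(A,C) and LB = B, then L and its
  inverse lie in B, so L is in \<G>(A,B); hence if LB = Bx, the ideal Ax\<inverse>L lies in \<G>(A,B) and
  has the class of L.\<close>

section \<open>Homomorphisms induced on factor groups\<close>

lemma FactGroup_induced_hom:
  assumes h: "h \<in> hom G H" and N: "N \<lhd> G" and K: "K \<lhd> H" and hN: "h ` N \<subseteq> K"
  obtains \<phi> where "\<phi> \<in> hom (G Mod N) (H Mod K)"
    and "\<And>x. x \<in> carrier G \<Longrightarrow> \<phi> (N #>\<^bsub>G\<^esub> x) = K #>\<^bsub>H\<^esub> h x"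
proof (rule FactGroup_universal[OF _ N])
  interpret G: normal N G by (rule N)
  interpret K: normal K H by (rule K)
  interpret group_hom G H h by unfold_locales (rule h)
  show "(\<lambda>x. K #>\<^bsub>H\<^esub> h x) \<in> hom G (H Mod K)"
    by (rule homI) (auto simp: carrier_FactGroup K.rcos_sum)
  fix x y assume x: "x \<in> carrier G" and y: "y \<in> carrier G" and eq: "N #>\<^bsub>G\<^esub> x = N #>\<^bsub>G\<^esub> y"
  have "x \<otimes>\<^bsub>G\<^esub> inv\<^bsub>G\<^esub> y \<in> N"
    using G.rcos_module_imp[OF G.is_group y] G.rcos_self[OF x G.subgroup_axioms] eq by simp
  then have "h x \<otimes>\<^bsub>H\<^esub> inv\<^bsub>H\<^esub> h y \<in> K"
    using hN x y by auto
  then have "h x \<in> K #>\<^bsub>H\<^esub> h y"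
    using K.rcos_module_rev[OF K.is_group] x y by simp
  then show "K #>\<^bsub>H\<^esub> h x = K #>\<^bsub>H\<^esub> h y"
    using K.repr_independence[OF _ _ K.subgroup_axioms] y by simp
qed (rule that)

lemma FactGroup_induced_inj_on:
  assumes "group_hom G H h" and N: "subgroup N G" and K: "subgroup K H"
    and \<phi>: "\<And>x. x \<in> carrier G \<Longrightarrow> \<phi> (N #>\<^bsub>G\<^esub> x) = K #>\<^bsub>H\<^esub> h x"
    and reflect: "\<And>x. x \<in> carrier G \<Longrightarrow> h x \<in> K \<Longrightarrow> x \<in> N"
  shows "inj_on \<phi> (carrier (G Mod N))"
proof (rule inj_onI, clarsimp simp: carrier_FactGroup)
  interpret group_hom G H h by (rule assms)
  fix x y assume x: "x \<in> carrier G" and y: "y \<in> carrier G"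
    and eq: "\<phi> (N #>\<^bsub>G\<^esub> x) = \<phi> (N #>\<^bsub>G\<^esub> y)"
  have "h x \<in> K #>\<^bsub>H\<^esub> h x"
    using H.rcos_self[OF _ K] x by simp
  also have "K #>\<^bsub>H\<^esub> h x = K #>\<^bsub>H\<^esub> h y"
    using eq x y by (simp add: \<phi>)
  finally have "h (x \<otimes>\<^bsub>G\<^esub> inv\<^bsub>G\<^esub> y) \<in> K"
    using subgroup.rcos_module_imp[OF K H.is_group] x y by simp
  then have "x \<in> N #>\<^bsub>G\<^esub> y"
    using subgroup.rcos_module_rev[OF N G.is_group] reflect x y by simp
  then show "N #>\<^bsub>G\<^esub> x = N #>\<^bsub>G\<^esub> y"
    using G.repr_independence[OF _ y N] by simp
qed

lemma FactGroup_induced_exact: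
  assumes "group_hom G H i" and "group_hom H H' h"
    and N: "subgroup N G" and K: "subgroup K H" and K': "subgroup K' H'"
    and \<phi>: "\<And>x. x \<in> carrier G \<Longrightarrow> \<phi> (N #>\<^bsub>G\<^esub> x) = K #>\<^bsub>H\<^esub> i x"
    and \<psi>: "\<And>y. y \<in> carrier H \<Longrightarrow> \<psi> (K #>\<^bsub>H\<^esub> y) = K' #>\<^bsub>H'\<^esub> h y"
    and hK: "K' \<subseteq> h ` K" and hi: "\<And>x. x \<in> carrier G \<Longrightarrow> h (i x) = \<one>\<^bsub>H'\<^esub>"
    and ker: "kernel H H' h \<subseteq> i ` carrier G"
  shows "\<phi> ` carrier (G Mod N) = kernel (H Mod K) (H' Mod K') \<psi>"
proof
  interpret i: group_hom G H i by (rule assms)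
  interpret h: group_hom H H' h by (rule assms)
  show "\<phi> ` carrier (G Mod N) \<subseteq> kernel (H Mod K) (H' Mod K') \<psi>"
    using subgroup.rcos_const[OF K' h.H.is_group] subgroup.one_closed[OF K']
    by (auto simp: carrier_FactGroup kernel_def \<phi> \<psi> hi)
  show "kernel (H Mod K) (H' Mod K') \<psi> \<subseteq> \<phi> ` carrier (G Mod N)"
  proof
    fix Y assume "Y \<in> kernel (H Mod K) (H' Mod K') \<psi>"
    then obtain y where y: "y \<in> carrier H" "Y = K #>\<^bsub>H\<^esub> y" and "\<psi> Y = K'"
      by (auto simp: kernel_def carrier_FactGroup)
    then have "K' #>\<^bsub>H'\<^esub> h y = K'"
      by (simp add: \<psi>)
    then have "h y \<in> K'"
      using h.H.rcos_self[OF h.hom_closed[OF y(1)] K'] by simp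
    then obtain k where k: "k \<in> K" "h k = h y"
      using hK by auto
    have kH: "k \<in> carrier H"
      using subgroup.subset[OF K] k(1) by blast
    define z where "z = inv\<^bsub>H\<^esub> k \<otimes>\<^bsub>H\<^esub> y"
    have "z \<in> kernel H H' h"
      using k kH y by (simp add: z_def kernel_def h.hom_mult)
    then obtain x where x: "x \<in> carrier G" "i x = z"
      using ker by auto
    have "y = k \<otimes>\<^bsub>H\<^esub> z"
      using kH y by (simp add: z_def i.H.m_assoc[symmetric])
    then have "y \<in> K #>\<^bsub>H\<^esub> z"
      using k(1) unfolding r_coset_def by blast
    then have "Y = \<phi> (N #>\<^bsub>G\<^esub> x)"
      using i.H.repr_independence[OF _ _ K] x kH y by (simp add: \<phi> z_def)
    then show "Y \<in> \<phi> ` carrier (G Mod N)"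
      using x(1) by (auto simp: carrier_FactGroup)
  qed
qed

section \<open>Products of submodules\<close>

lemma ext_prod_induct [consumes 1, case_names zero add mult]:
  assumes "s \<in> ext_prod L M" and "P 0" and "\<And>a b. P a \<Longrightarrow> P b \<Longrightarrow> P (a + b)"
    and "\<And>x y. x \<in> L \<Longrightarrow> y \<in> M \<Longrightarrow> P (x * y)"
  shows "P s"
proof -
  obtain n :: nat and x y where s: "s = (\<Sum>i<n. x i * y i)" and xy: "\<forall>i<n. x i \<in> L \<and> y i \<in> M"
    using assms(1) unfolding ext_prod_def by blast
  have "P (\<Sum>i<k. x i * y i)" if "k \<le> n" for k
    using that by (induction k) (auto simp: assms(2-4) xy)
  then show ?thesis
    using s by simp
qed

lemma ext_prod_least:
  assumes "0 \<in> P" and "\<And>a b. a \<in> P \<Longrightarrow> b \<in> P \<Longrightarrow> a + b \<in> P"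
    and "\<And>x y. x \<in> L \<Longrightarrow> y \<in> M \<Longrightarrow> x * y \<in> P"
  shows "ext_prod L M \<subseteq> P"
  using ext_prod_induct[where P = "\<lambda>s. s \<in> P"] assms by blast

lemma sum_mem_ext_prod:
  "\<forall>i<(n::nat). x i \<in> L \<and> y i \<in> M \<Longrightarrow> (\<Sum>i<n. x i * y i) \<in> ext_prod L M"
  unfolding ext_prod_def by blast

lemma zero_mem_ext_prod: "0 \<in> ext_prod L M"
  using sum_mem_ext_prod[of 0] by simp

lemma add_mult_mem_ext_prod:
  assumes "s \<in> ext_prod L M" and "a \<in> L" and "b \<in> M"
  shows "s + a * b \<in> ext_prod L M"
proof -
  obtain n :: nat and x y where s: "s = (\<Sum>i<n. x i * y i)" and xy: "\<forall>i<n. x i \<in> L \<and> y i \<in> M"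
    using assms(1) unfolding ext_prod_def by blast
  have "(\<Sum>i<Suc n. (x(n := a)) i * (y(n := b)) i) = s + a * b"
    using s by (auto intro!: sum.cong)
  moreover have "\<forall>i<Suc n. (x(n := a)) i \<in> L \<and> (y(n := b)) i \<in> M"
    using xy assms by (auto simp: less_Suc_eq)
  ultimately show ?thesis
    using sum_mem_ext_prod[of "Suc n" "x(n := a)" L "y(n := b)" M] by simp
qed

lemma mult_mem_ext_prod: "a \<in> L \<Longrightarrow> b \<in> M \<Longrightarrow> a * b \<in> ext_prod L M"
  using add_mult_mem_ext_prod[OF zero_mem_ext_prod] by fastforce

lemma subset_ext_prod: "1 \<in> B \<Longrightarrow> L \<subseteq> ext_prod L B"
  using mult_mem_ext_prod[of _ L 1 B] by auto

lemma add_mem_ext_prod: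
  assumes "s \<in> ext_prod L M" and "t \<in> ext_prod L M"
  shows "s + t \<in> ext_prod L M"
proof -
  have "ext_prod L M \<subseteq> {t. \<forall>s\<in>ext_prod L M. s + t \<in> ext_prod L M}"
    by (rule ext_prod_least) (auto simp flip: add.assoc intro: add_mult_mem_ext_prod)
  then show ?thesis
    using assms by blast
qed

lemma ext_prod_mono: "L \<subseteq> L' \<Longrightarrow> M \<subseteq> M' \<Longrightarrow> ext_prod L M \<subseteq> ext_prod L' M'"
  by (rule ext_prod_least) (auto intro: zero_mem_ext_prod add_mem_ext_prod mult_mem_ext_prod)

lemma ext_prod_commute: "ext_prod L M = ext_prod M L"
proof -
  have "ext_prod L M \<subseteq> ext_prod M L" for L M :: "'a::comm_ring_1 set"
    by (rule ext_prod_least)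
      (auto intro: zero_mem_ext_prod add_mem_ext_prod, metis mult_mem_ext_prod mult.commute)
  then show ?thesis
    by blast
qed

lemma ext_prod_assoc: "ext_prod (ext_prod L M) N = ext_prod L (ext_prod M N)"
proof -
  have *: "ext_prod (ext_prod L M) N \<subseteq> ext_prod L (ext_prod M N)" for L M N :: "'a::comm_ring_1 set"
  proof (rule ext_prod_least[OF zero_mem_ext_prod add_mem_ext_prod])
    fix s n assume "s \<in> ext_prod L M" and n: "n \<in> N"
    then show "s * n \<in> ext_prod L (ext_prod M N)"
    proof (induction rule: ext_prod_induct)
      case (mult x y)
      then have "x * (y * n) \<in> ext_prod L (ext_prod M N)"
        using n by (intro mult_mem_ext_prod)
      then show ?case
        by (simp add: mult.assoc)
    qed (auto simp: distrib_right zero_mem_ext_prod add_mem_ext_prod)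
  qed
  show ?thesis
    using *[of L M N] *[of N M L] by (simp add: ext_prod_commute)
qed

lemma ext_prod_left_commute: "ext_prod L (ext_prod M N) = ext_prod M (ext_prod L N)"
  by (metis ext_prod_assoc ext_prod_commute)

lemmas ext_prod_ac = ext_prod_assoc ext_prod_commute ext_prod_left_commute

lemma subring_ofD:
  assumes "subring_of R"
  shows "1 \<in> R" and "0 \<in> R" and "x \<in> R \<Longrightarrow> y \<in> R \<Longrightarrow> x + y \<in> R"
    and "x \<in> R \<Longrightarrow> y \<in> R \<Longrightarrow> x * y \<in> R"
  using assms unfolding subring_of_def by (metis add.right_inverse)+

lemma subring_UNIV: "subring_of UNIV"
  unfolding subring_of_def by simp

lemma ext_prod_subset_subring: "subring_of S \<Longrightarrow> L \<subseteq> S \<Longrightarrow> M \<subseteq> S \<Longrightarrow> ext_prod L M \<subseteq> S"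
  by (rule ext_prod_least) (auto dest: subring_ofD)

lemma submod_mono: "submod R S L \<Longrightarrow> S \<subseteq> T \<Longrightarrow> submod R T L"
  unfolding submod_def by blast

lemma submod_subring: "subring_of B \<Longrightarrow> A \<subseteq> B \<Longrightarrow> B \<subseteq> C \<Longrightarrow> submod A C B"
  unfolding submod_def by (auto dest: subring_ofD)

lemma ext_prod_subring_left:
  assumes "subring_of R" and "submod R S L"
  shows "ext_prod R L = L"
proof
  show "ext_prod R L \<subseteq> L"
    using assms(2) unfolding submod_def by (intro ext_prod_least) auto
  show "L \<subseteq> ext_prod R L"
    using mult_mem_ext_prod[OF subring_ofD(1)[OF assms(1)]] by fastforce
qed

lemma ext_prod_subring_idem: "subring_of A \<Longrightarrow> subring_of B \<Longrightarrow> A \<subseteq> B \<Longrightarrow> ext_prod A B = B"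
  using ext_prod_subring_left submod_subring by blast

lemma submod_ext_prod:
  assumes "subring_of S" and L: "submod R S L" and M: "submod R S M"
  shows "submod R S (ext_prod L M)"
  unfolding submod_def
proof (intro conjI ballI)
  show "ext_prod L M \<subseteq> S"
    using assms ext_prod_subset_subring unfolding submod_def by blast
  fix r s assume r: "r \<in> R" and s: "s \<in> ext_prod L M"
  from s show "r * s \<in> ext_prod L M"
  proof (induction rule: ext_prod_induct)
    case (mult x y)
    then have "(r * x) * y \<in> ext_prod L M"
      using L r unfolding submod_def by (intro mult_mem_ext_prod) auto
    then show ?case
      by (simp add: mult.assoc)
  qed (auto simp: distrib_left zero_mem_ext_prod add_mem_ext_prod)
qed (auto intro: zero_mem_ext_prod add_mem_ext_prod)

section \<open>Invertible and principal ideals\<close>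

lemma carrier_IG_iff:
  "L \<in> carrier (IG R S) \<longleftrightarrow> submod R S L \<and> (\<exists>L'. submod R S L' \<and> ext_prod L L' = R)"
  by (simp add: IG_def invertible_ideal_def)

lemma IG_mult [simp]: "L \<otimes>\<^bsub>IG R S\<^esub> M = ext_prod L M"
  by (simp add: IG_def)

lemma IG_one [simp]: "\<one>\<^bsub>IG R S\<^esub> = R"
  by (simp add: IG_def)

lemma IG_comm_group:
  assumes R: "subring_of R" and S: "subring_of S" and "R \<subseteq> S"
  shows "comm_group (IG R S)"
proof (rule comm_groupI)
  have RS: "submod R S R"
    using submod_subring[OF R] \<open>R \<subseteq> S\<close> by blast
  note unit = ext_prod_subring_left[OF R]
  fix L M assume "L \<in> carrier (IG R S)" and "M \<in> carrier (IG R S)"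
  then obtain L' M' where L: "submod R S L" "submod R S L'" "ext_prod L L' = R"
    and M: "submod R S M" "submod R S M'" "ext_prod M M' = R"
    by (auto simp: carrier_IG_iff)
  have "ext_prod (ext_prod L M) (ext_prod L' M') = ext_prod (ext_prod L L') (ext_prod M M')"
    by (simp add: ext_prod_ac)
  also have "\<dots> = R"
    using unit[OF RS] L M by simp
  moreover have "submod R S (ext_prod L M)" and "submod R S (ext_prod L' M')"
    using L M submod_ext_prod[OF S] by auto
  ultimately show "L \<otimes>\<^bsub>IG R S\<^esub> M \<in> carrier (IG R S)"
    unfolding IG_mult carrier_IG_iff by blast
next
  show "\<one>\<^bsub>IG R S\<^esub> \<in> carrier (IG R S)"
    using submod_subring[OF R] ext_prod_subring_idem[OF R R] assms by (auto simp: carrier_IG_iff)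
next
  fix L assume "L \<in> carrier (IG R S)"
  then obtain L' where L: "submod R S L" "submod R S L'" "ext_prod L L' = R"
    by (auto simp: carrier_IG_iff)
  then show "\<one>\<^bsub>IG R S\<^esub> \<otimes>\<^bsub>IG R S\<^esub> L = L"
    using ext_prod_subring_left[OF R] by simp
  show "\<exists>L'\<in>carrier (IG R S). L' \<otimes>\<^bsub>IG R S\<^esub> L = \<one>\<^bsub>IG R S\<^esub>"
    using L by (intro bexI[of _ L']) (auto simp: carrier_IG_iff ext_prod_commute)
qed (simp_all add: ext_prod_ac)

lemma cyc_one: "cyc R 1 = R"
  unfolding cyc_def by simp

lemma self_mem_cyc: "subring_of R \<Longrightarrow> x \<in> cyc R x"
  unfolding cyc_def by (force dest: subring_ofD)

lemma submod_cyc: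
  assumes R: "subring_of R" and S: "subring_of S" and "R \<subseteq> S" and "x \<in> S"
  shows "submod R S (cyc R x)"
  unfolding submod_def
proof (intro conjI ballI)
  show "cyc R x \<subseteq> S"
    using assms subring_ofD(4)[OF S] unfolding cyc_def by blast
  show "0 \<in> cyc R x"
    using subring_ofD(2)[OF R] unfolding cyc_def by force
  fix a b assume "a \<in> cyc R x" and "b \<in> cyc R x"
  then obtain r s where "r \<in> R" "a = r * x" "s \<in> R" "b = s * x"
    unfolding cyc_def by blast
  then show "a + b \<in> cyc R x"
    using subring_ofD(3)[OF R] unfolding cyc_def by (auto intro!: exI[of _ "r + s"] simp: distrib_right)
next
  fix r a assume "r \<in> R" and "a \<in> cyc R x"
  then show "r * a \<in> cyc R x"
    using subring_ofD(4)[OF R] unfolding cyc_def by (auto simp: mult.assoc[symmetric])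
qed

lemma ext_prod_cyc_left:
  assumes R: "subring_of R" and M: "submod R S M"
  shows "ext_prod (cyc R x) M = (*) x ` M"
proof
  show "ext_prod (cyc R x) M \<subseteq> (*) x ` M"
  proof (rule ext_prod_least)
    show "0 \<in> (*) x ` M"
      using M unfolding submod_def by force
    show "a + b \<in> (*) x ` M" if "a \<in> (*) x ` M" and "b \<in> (*) x ` M" for a b
      using that M unfolding submod_def by (force simp flip: distrib_left)
    show "a * m \<in> (*) x ` M" if "a \<in> cyc R x" and "m \<in> M" for a m
    proof -
      obtain r where "r \<in> R" and "a = r * x"
        using \<open>a \<in> cyc R x\<close> unfolding cyc_def by blast
      moreover have "r * m \<in> M"
        using \<open>r \<in> R\<close> \<open>m \<in> M\<close> M unfolding submod_def by blast
      ultimately show ?thesis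
        by (force simp: ac_simps)
    qed
  qed
  show "(*) x ` M \<subseteq> ext_prod (cyc R x) M"
    using mult_mem_ext_prod[OF self_mem_cyc[OF R]] by blast
qed

lemma cyc_mult:
  assumes "subring_of R"
  shows "ext_prod (cyc R x) (cyc R y) = cyc R (x * y)"
proof -
  have "ext_prod (cyc R x) (cyc R y) = (*) x ` cyc R y"
    using ext_prod_cyc_left[OF assms submod_cyc[OF assms subring_UNIV]] by simp
  also have "\<dots> = cyc R (x * y)"
    unfolding cyc_def by (auto simp: image_iff) (metis mult.left_commute)+
  finally show ?thesis .
qed

lemma ext_prod_cyc_subring:
  assumes "subring_of R" and "subring_of T" and "R \<subseteq> T"
  shows "ext_prod (cyc R x) T = cyc T x"
proof -
  have "ext_prod (cyc R x) T = (*) x ` T"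
    using ext_prod_cyc_left submod_subring assms by blast
  also have "\<dots> = cyc T x"
    unfolding cyc_def by (auto simp: image_iff mult.commute)
  finally show ?thesis .
qed

lemma cyc_in_carrier_IG:
  assumes R: "subring_of R" and S: "subring_of S" and "R \<subseteq> S" and "unit_in S x"
  shows "cyc R x \<in> carrier (IG R S)"
proof -
  obtain y where "x \<in> S" "y \<in> S" "x * y = 1"
    using \<open>unit_in S x\<close> unfolding unit_in_def by blast
  then show ?thesis
    using submod_cyc[OF R S \<open>R \<subseteq> S\<close>] cyc_mult[OF R, of x y]
    by (auto simp: carrier_IG_iff cyc_one)
qed

lemma Princ_subgroup:
  assumes R: "subring_of R" and S: "subring_of S" and "R \<subseteq> S"
  shows "subgroup (Princ R S) (IG R S)"
proof -
  interpret comm_group "IG R S"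
    using IG_comm_group[OF assms] .
  show ?thesis
  proof (rule subgroupI)
    show "Princ R S \<subseteq> carrier (IG R S)"
      unfolding Princ_def using cyc_in_carrier_IG[OF assms] by auto
    have "unit_in S 1"
      unfolding unit_in_def using subring_ofD(1)[OF S] by auto
    then show "Princ R S \<noteq> {}"
      unfolding Princ_def by auto
  next
    fix L assume "L \<in> Princ R S"
    then obtain x y where L: "L = cyc R x" and xy: "x \<in> S" "y \<in> S" "x * y = 1"
      unfolding Princ_def unit_in_def by blast
    then have units: "unit_in S x" "unit_in S y"
      unfolding unit_in_def by (auto simp: mult.commute)
    have "inv\<^bsub>IG R S\<^esub> L = cyc R y"
      using L xy units cyc_in_carrier_IG[OF assms] cyc_mult[OF R, of y x]
      by (intro inv_equality) (auto simp: cyc_one mult.commute)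
    then show "inv\<^bsub>IG R S\<^esub> L \<in> Princ R S"
      using units unfolding Princ_def by auto
  next
    fix L M assume "L \<in> Princ R S" and "M \<in> Princ R S"
    then obtain x y where "unit_in S x" "L = cyc R x" "unit_in S y" "M = cyc R y"
      unfolding Princ_def by auto
    moreover have "unit_in S (x * y)"
      using calculation subring_ofD(4)[OF S] unfolding unit_in_def
      by (metis mult.assoc mult.left_commute mult_1_right)
    ultimately show "L \<otimes>\<^bsub>IG R S\<^esub> M \<in> Princ R S"
      unfolding Princ_def by (auto simp: cyc_mult[OF R])
  qed
qed

lemma Princ_normal:
  "subring_of R \<Longrightarrow> subring_of S \<Longrightarrow> R \<subseteq> S \<Longrightarrow> Princ R S \<lhd> IG R S"
  using comm_group.subgroup_imp_normal IG_comm_group Princ_subgroup by blast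

lemma ClassGroup_comm_group:
  "subring_of R \<Longrightarrow> subring_of S \<Longrightarrow> R \<subseteq> S \<Longrightarrow> comm_group (ClassGroup R S)"
  unfolding ClassGroup_def using comm_group.abelian_FactGroup IG_comm_group Princ_subgroup by blast

section \<open>Change of rings\<close>

lemma IG_inclusion_hom: "S \<subseteq> T \<Longrightarrow> (\<lambda>L. L) \<in> hom (IG R S) (IG R T)"
  by (rule homI) (auto simp: carrier_IG_iff intro: submod_mono)

lemma IG_inclusion_group_hom:
  assumes "subring_of R" and "subring_of S" and "R \<subseteq> S" and "subring_of T" and "S \<subseteq> T"
  shows "group_hom (IG R S) (IG R T) (\<lambda>L. L)"
  using IG_comm_group[of R S] IG_comm_group[of R T] IG_inclusion_hom[of S T R] assms
  by (simp add: group_hom_def group_hom_axioms_def comm_group_def)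

lemma Princ_mono: "S \<subseteq> T \<Longrightarrow> Princ R S \<subseteq> Princ R T"
  unfolding Princ_def unit_in_def by blast

lemma Princ_Int_carrier_IG:
  assumes R: "subring_of R"
  shows "Princ R T \<inter> carrier (IG R S) \<subseteq> Princ R S"
proof
  fix L assume L_mem: "L \<in> Princ R T \<inter> carrier (IG R S)"
  then obtain x y where L: "L = cyc R x" "x * y = 1"
    unfolding Princ_def unit_in_def by blast
  obtain L' where "submod R S L" and L': "submod R S L'" "ext_prod L L' = R"
    using IntD2[OF L_mem] unfolding carrier_IG_iff by blast
  have "x \<in> S"
    using L \<open>submod R S L\<close> self_mem_cyc[OF R] unfolding submod_def by blast
  have "ext_prod L L' \<subseteq> {s. y * s \<in> L'}"
  proof (rule ext_prod_least)
    show "0 \<in> {s. y * s \<in> L'}"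
      using L' unfolding submod_def by simp
    show "a + b \<in> {s. y * s \<in> L'}" if "a \<in> {s. y * s \<in> L'}" and "b \<in> {s. y * s \<in> L'}" for a b
      using that L' unfolding submod_def by (simp add: distrib_left)
    show "a * l \<in> {s. y * s \<in> L'}" if "a \<in> L" and "l \<in> L'" for a l
    proof -
      obtain r where "r \<in> R" and "a = r * x"
        using \<open>a \<in> L\<close> L(1) unfolding cyc_def by blast
      moreover have "y * (r * x * l) = r * l"
        using L(2) by (metis mult.assoc mult.commute mult_1_right)
      ultimately show ?thesis
        using \<open>l \<in> L'\<close> L' unfolding submod_def by simp
    qed
  qed
  then have "y \<in> S"
    using L' subring_ofD(1)[OF R] unfolding submod_def by auto
  with \<open>x \<in> S\<close> L show "L \<in> Princ R S"
    unfolding Princ_def unit_in_def by blast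
qed

lemma submod_extension:
  assumes B: "subring_of B" and C: "subring_of C" and "B \<subseteq> C" and "L \<subseteq> C"
  shows "submod B C (ext_prod L B)"
  unfolding submod_def
proof (intro conjI ballI)
  show "ext_prod L B \<subseteq> C"
    using assms by (intro ext_prod_subset_subring) auto
  fix r s assume "r \<in> B" and "s \<in> ext_prod L B"
  then have "r * s \<in> ext_prod B (ext_prod L B)"
    by (rule mult_mem_ext_prod)
  also have "ext_prod B (ext_prod L B) = ext_prod L (ext_prod B B)"
    by (rule ext_prod_left_commute)
  finally show "r * s \<in> ext_prod L B"
    by (simp add: ext_prod_subring_idem[OF B B])
qed (auto intro: zero_mem_ext_prod add_mem_ext_prod)

lemma IG_extension_hom:
  assumes A: "subring_of A" and B: "subring_of B" and "A \<subseteq> B"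
    and C: "subring_of C" and "B \<subseteq> C"
  shows "(\<lambda>L. ext_prod L B) \<in> hom (IG A C) (IG B C)"
proof (rule homI)
  have BB: "ext_prod B B = B"
    using ext_prod_subring_idem[OF B B] by simp
  fix L assume "L \<in> carrier (IG A C)"
  then obtain L' where L: "submod A C L" "submod A C L'" "ext_prod L L' = A"
    unfolding carrier_IG_iff by blast
  have "ext_prod (ext_prod L B) (ext_prod L' B) = ext_prod (ext_prod L L') (ext_prod B B)"
    by (simp add: ext_prod_ac)
  also have "\<dots> = B"
    using L(3) BB ext_prod_subring_idem[OF A B \<open>A \<subseteq> B\<close>] by simp
  moreover have "L \<subseteq> C" and "L' \<subseteq> C"
    using L unfolding submod_def by auto
  ultimately show "ext_prod L B \<in> carrier (IG B C)"
    using submod_extension[OF B C \<open>B \<subseteq> C\<close>] unfolding carrier_IG_iff by blast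
next
  fix L M
  have "ext_prod (ext_prod L B) (ext_prod M B) = ext_prod (ext_prod L M) (ext_prod B B)"
    by (simp add: ext_prod_ac)
  then show "ext_prod (L \<otimes>\<^bsub>IG A C\<^esub> M) B = ext_prod L B \<otimes>\<^bsub>IG B C\<^esub> ext_prod M B"
    using ext_prod_subring_idem[OF B B] by simp
qed

lemma IG_extension_group_hom:
  assumes "subring_of A" and "subring_of B" and "A \<subseteq> B" and "subring_of C" and "B \<subseteq> C"
  shows "group_hom (IG A C) (IG B C) (\<lambda>L. ext_prod L B)"
  using IG_comm_group[of A C] IG_comm_group[of B C] IG_extension_hom[OF assms] assms
  by (simp add: group_hom_def group_hom_axioms_def comm_group_def)

lemma ext_prod_image_Princ:
  assumes "subring_of A" and "subring_of B" and "A \<subseteq> B"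
  shows "(\<lambda>L. ext_prod L B) ` Princ A C = Princ B C"
  unfolding Princ_def using ext_prod_cyc_subring[OF assms] by auto

lemma ext_prod_eq_if_carrier_IG:
  assumes A: "subring_of A" and B: "subring_of B" and "A \<subseteq> B"
    and "L \<in> carrier (IG A B)"
  shows "ext_prod L B = B"
proof
  obtain L' where L: "L \<subseteq> B" "L' \<subseteq> B" "ext_prod L L' = A"
    using \<open>L \<in> carrier (IG A B)\<close> unfolding carrier_IG_iff submod_def by blast
  show "ext_prod L B \<subseteq> B"
    using ext_prod_subset_subring[OF B L(1)] by simp
  have "B = ext_prod (ext_prod L L') B"
    using L(3) ext_prod_subring_idem[OF A B \<open>A \<subseteq> B\<close>] by simp
  also have "\<dots> = ext_prod L (ext_prod L' B)"
    by (rule ext_prod_assoc)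
  also have "\<dots> \<subseteq> ext_prod L B"
    using ext_prod_mono[OF order_refl ext_prod_subset_subring[OF B L(2) order_refl]] .
  finally show "B \<subseteq> ext_prod L B" .
qed

lemma carrier_IG_if_ext_prod_eq:
  assumes A: "subring_of A" and B: "subring_of B" and "A \<subseteq> B"
    and "L \<in> carrier (IG A C)" and LB: "ext_prod L B = B"
  shows "L \<in> carrier (IG A B)"
proof -
  obtain L' where L: "submod A C L" "submod A C L'" "ext_prod L L' = A"
    using \<open>L \<in> carrier (IG A C)\<close> unfolding carrier_IG_iff by blast
  have BB: "ext_prod B B = B"
    using ext_prod_subring_idem[OF B B] by simp
  have "ext_prod L' B = ext_prod L' (ext_prod B B)"
    using BB by simp
  also have "\<dots> = ext_prod (ext_prod L B) (ext_prod L' B)"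
    using LB by (simp add: ext_prod_left_commute)
  also have "\<dots> = ext_prod (ext_prod L L') (ext_prod B B)"
    by (simp add: ext_prod_ac)
  also have "\<dots> = B"
    using L(3) BB ext_prod_subring_idem[OF A B \<open>A \<subseteq> B\<close>] by simp
  finally have "L' \<subseteq> B"
    using subset_ext_prod[OF subring_ofD(1)[OF B], of L'] by simp
  moreover have "L \<subseteq> B"
    using subset_ext_prod[OF subring_ofD(1)[OF B], of L] LB by simp
  ultimately show ?thesis
    using L unfolding carrier_IG_iff submod_def by blast
qed

theorem theorem5p1:
  fixes A B :: "'a::comm_ring_1 set"
  assumes "subring_of A" and "subring_of B" and "A \<subseteq> B"
  shows "comm_group (ClassGroup A B) \<and> comm_group (ClassGroup A UNIV) \<and> comm_group (ClassGroup B UNIV)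
    \<and> (\<exists>f g.
        f \<in> hom (ClassGroup A B) (ClassGroup A UNIV)
      \<and> g \<in> hom (ClassGroup A UNIV) (ClassGroup B UNIV)
      \<and> (\<forall>L \<in> carrier (IG A B). f (ideal_class A B L) = ideal_class A UNIV L)
      \<and> (\<forall>L \<in> carrier (IG A UNIV). g (ideal_class A UNIV L) = ideal_class B UNIV (ext_prod L B))
      \<and> inj_on f (carrier (ClassGroup A B))
      \<and> f ` carrier (ClassGroup A B) = kernel (ClassGroup A UNIV) (ClassGroup B UNIV) g)"
proof -
  note AB = assms and A = assms(1) and B = assms(2) and C = subring_UNIV
  have AC: "A \<subseteq> UNIV" and BC: "B \<subseteq> UNIV"
    by simp_all
  note incl = IG_inclusion_group_hom[OF AB C BC] and ext = IG_extension_group_hom[OF AB C BC]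
  have "(\<lambda>L. L) ` Princ A B \<subseteq> Princ A UNIV"
    using Princ_mono[OF BC] by simp
  then obtain f where f_hom: "f \<in> hom (ClassGroup A B) (ClassGroup A UNIV)"
    and f_class: "\<And>L. L \<in> carrier (IG A B) \<Longrightarrow> f (ideal_class A B L) = ideal_class A UNIV L"
    unfolding ClassGroup_def ideal_class_def
    using FactGroup_induced_hom[OF group_hom.homh[OF incl] Princ_normal[OF AB] Princ_normal[OF A C AC]]
    by blast
  obtain g where g_hom: "g \<in> hom (ClassGroup A UNIV) (ClassGroup B UNIV)"
    and g_class: "\<And>L. L \<in> carrier (IG A UNIV) \<Longrightarrow>
      g (ideal_class A UNIV L) = ideal_class B UNIV (ext_prod L B)"
    unfolding ClassGroup_def ideal_class_def
    using FactGroup_induced_hom[OF group_hom.homh[OF ext] Princ_normal[OF A C AC] Princ_normal[OF B C BC]]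
      ext_prod_image_Princ[OF AB]
    by blast
  have "inj_on f (carrier (ClassGroup A B))"
    unfolding ClassGroup_def
    by (rule FactGroup_induced_inj_on[OF incl Princ_subgroup[OF AB] Princ_subgroup[OF A C AC]
          f_class[unfolded ideal_class_def]])
      (use Princ_Int_carrier_IG[OF A, of UNIV B] in auto)
  moreover have "f ` carrier (ClassGroup A B) = kernel (ClassGroup A UNIV) (ClassGroup B UNIV) g"
    unfolding ClassGroup_def
    by (rule FactGroup_induced_exact[OF incl ext Princ_subgroup[OF AB] Princ_subgroup[OF A C AC]
          Princ_subgroup[OF B C BC] f_class[unfolded ideal_class_def] g_class[unfolded ideal_class_def]])
      (auto simp: ext_prod_image_Princ[OF AB] ext_prod_eq_if_carrier_IG[OF AB] kernel_def
        intro: carrier_IG_if_ext_prod_eq[OF AB])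
  ultimately show ?thesis
    using ClassGroup_comm_group[OF AB] ClassGroup_comm_group[OF A C AC]
      ClassGroup_comm_group[OF B C BC] f_hom g_hom f_class g_class
    by blast
qed

end
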